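(* Let $k\ge 0$. (1) If $\pi$ is a permutation with exactly $k$ descents, then $f(\pi)\in\widehat{\mathcal{A}}_{k+1}$. (2) If $w\in\widehat{\mathcal{A}}_{k+1}$, then $g(w)$ is a permutation with exactly $k$ descents.
   Context: A permutation of length $n\ge1$ is a word $\pi=\pi_1\cdots\pi_n$ containing each of $1,\dots,n$ exactly once. A descent of $\pi$ is an index $i$ with $\pi_i>\pi_{i+1}$. A run of $\pi$ is a maximal consecutive increasing sequence of letters; for a letter $c$ of $\pi$, $d_\pi(c)$ denotes the index of the run containing $c$, i.e. $1$ plus the number of descents at indices before the position of $c$. Words are finite sequences over the positive integers; $\max(w)$ is the largest letter of $w$. $\widehat{\mathcal{A}}$ is the set of words $w$ such that (AC1) every $i\in\{1,\dots,\max(w)\}$ occurs in $w$, and (AC2) for every $i\in\{1,\dots,\max(w)-1\}$, the rightmost occurrence of $i$ in $w$ is preceded (somewhere to its left) by an occurrence of $i+1$. $\widehat{\mathcal{A}}_k$ is the set of $w\in\widehat{\mathcal{A}}$ with $\max(w)=k$. For a word $w$ and letter $j$, $p_w(j)$ is the list of positions $i$ with $w_i=j$, in increasing order. Define $f(\pi)=d_\pi(1)d_\pi(2)\cdots d_\pi(n)$ for a permutation $\pi$ of length $n$, and $g(w)$ to be the concatenation $p_w(1)p_w(2)\cdots p_w(\max(w))$ for $w\in\widehat{\mathcal{A}}$. (Example: $f(263415)=312231$, $g(214321)=261543$.) *)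

theory Defs
  imports Main
begin

text \<open>Words are lists of positive naturals; positions are 1-based in the paper,
  here list indices are 0-based and we shift explicitly.\<close>

definition is_perm :: "nat list \<Rightarrow> bool" where
  "is_perm \<pi> \<longleftrightarrow> length \<pi> \<ge> 1 \<and> distinct \<pi> \<and> set \<pi> = {1..length \<pi>}"

text \<open>Descent at (1-based) index i+1 means \<pi>!i > \<pi>!(i+1) with 0-based i.\<close>
definition descents :: "nat list \<Rightarrow> nat set" where
  "descents \<pi> = {i. Suc i < length \<pi> \<and> \<pi> ! i > \<pi> ! Suc i}"

definition num_descents :: "nat list \<Rightarrow> nat" where
  "num_descents \<pi> = card (descents \<pi>)"

definition pos :: "nat list \<Rightarrow> nat \<Rightarrow> nat" where
  "pos \<pi> c = (LEAST i. i < length \<pi> \<and> \<pi> ! i = c)"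

definition run_index :: "nat list \<Rightarrow> nat \<Rightarrow> nat" where
  "run_index \<pi> c = 1 + card {i \<in> descents \<pi>. i < pos \<pi> c}"

definition f_map :: "nat list \<Rightarrow> nat list" where
  "f_map \<pi> = map (run_index \<pi>) [1..<length \<pi> + 1]"

definition maxw :: "nat list \<Rightarrow> nat" where
  "maxw w = Max (set w)"

definition rightmost :: "nat list \<Rightarrow> nat \<Rightarrow> nat" where
  "rightmost w i = (GREATEST j. j < length w \<and> w ! j = i)"

definition in_Ahat :: "nat list \<Rightarrow> bool" where
  "in_Ahat w \<longleftrightarrow> w \<noteq> [] \<and> (\<forall>x \<in> set w. x \<ge> 1)
     \<and> (\<forall>i \<in> {1..maxw w}. i \<in> set w)
     \<and> (\<forall>i \<in> {1..<maxw w}. \<exists>j < rightmost w i. w ! j = i + 1)"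

definition in_Ahat_k :: "nat \<Rightarrow> nat list \<Rightarrow> bool" where
  "in_Ahat_k k w \<longleftrightarrow> in_Ahat w \<and> maxw w = k"

definition positions :: "nat list \<Rightarrow> nat \<Rightarrow> nat list" where
  "positions w j = filter (\<lambda>i. w ! (i - 1) = j) [1..<length w + 1]"

definition g_map :: "nat list \<Rightarrow> nat list" where
  "g_map w = concat (map (positions w) [1..<maxw w + 1])"

end

theory Submission
  imports Defs
begin

(* Write D(p) for the number of descents of \<pi> strictly before position p.
   The letter at position p lies in run 1 + D(p), and D grows from 0 to k by steps
   of at most one, so f(\<pi>) uses exactly the letters 1..k+1 (AC1, max = k+1).  For
   1 \<le> i \<le> k, the i-th descent \<pi>_s > \<pi>_{s+1} puts the letter \<pi>_s in run i and the
   smaller letter \<pi>_{s+1} in run i+1; in f(\<pi>) these are positions \<pi>_s and \<pi>_{s+1},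
   so an i+1 occurs to the left of an occurrence of i, hence before the rightmost i (AC2).

   Part (2).  g(w) is the concatenation of the increasing blocks p_w(1),...,p_w(k+1),
   which partition {1..|w|}; so g(w) is a permutation.  Descents can only occur at the
   junctions of consecutive blocks, and AC2 says exactly that the first position of
   j+1 is smaller than the last position of j, so every junction is a descent: k of them. *)

lemma finite_descents: "finite (descents \<pi>)"
  by (rule finite_subset[of _ "{..<length \<pi>}"]) (auto simp: descents_def)

definition descents_before :: "nat list \<Rightarrow> nat \<Rightarrow> nat" where
  "descents_before \<pi> p = card {i \<in> descents \<pi>. i < p}"

lemma descents_before_0: "descents_before \<pi> 0 = 0"
  by (simp add: descents_before_def)

lemma descents_before_Suc:
  "descents_before \<pi> (Suc s) = descents_before \<pi> s + (if s \<in> descents \<pi> then 1 else 0)"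
proof -
  have "{i \<in> descents \<pi>. i < Suc s} =
        {i \<in> descents \<pi>. i < s} \<union> (if s \<in> descents \<pi> then {s} else {})"
    by (auto simp: less_Suc_eq)
  then show ?thesis
    unfolding descents_before_def using finite_descents[of \<pi>] by auto
qed

lemma descents_before_le: "descents_before \<pi> p \<le> num_descents \<pi>"
  unfolding descents_before_def num_descents_def
  by (rule card_mono) (use finite_descents in auto)

lemma descents_before_last: "descents_before \<pi> (length \<pi> - 1) = num_descents \<pi>"
proof -
  have "{i \<in> descents \<pi>. i < length \<pi> - 1} = descents \<pi>" by (auto simp: descents_def)
  then show ?thesis unfolding descents_before_def num_descents_def by simp
qed

text \<open>Since the count grows by steps of one, the \<open>v\<close>-th descent (\<open>v \<ge> 1\<close>) is a descent
  \<open>s\<close> with exactly \<open>v - 1\<close> descents before it.\<close>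
lemma descent_with_count:
  "0 < v \<Longrightarrow> v \<le> descents_before \<pi> N \<Longrightarrow>
   \<exists>s<N. s \<in> descents \<pi> \<and> descents_before \<pi> s = v - 1"
proof (induction N)
  case 0
  then show ?case by (simp add: descents_before_0)
next
  case (Suc N)
  show ?case
  proof (cases "v \<le> descents_before \<pi> N")
    case True
    then show ?thesis using Suc by (meson less_SucI)
  next
    case False
    then have "N \<in> descents \<pi>" "descents_before \<pi> N = v - 1"
      using Suc.prems descents_before_Suc[of \<pi> N] by (auto split: if_splits)
    then show ?thesis by blast
  qed
qed

lemma num_descents_sorted: "sorted_wrt (<) xs \<Longrightarrow> num_descents xs = 0"
  by (auto simp: num_descents_def descents_def sorted_wrt_iff_nth_less card_eq_0_iff)
     (metis lessI order.asym)

lemma num_descents_snoc: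
  "num_descents (xs @ [y]) = num_descents xs + (if xs \<noteq> [] \<and> last xs > y then 1 else 0)"
proof -
  have at_last: "xs ! i = last xs" if "i < length xs" "\<not> Suc i < length xs" for i
    using that by (subst last_conv_nth) (auto intro: arg_cong[where f = "(!) xs"])
  have descents_eq: "descents (xs @ [y]) =
        descents xs \<union> (if xs \<noteq> [] \<and> last xs > y then {length xs - 1} else {})"
    by (auto simp: descents_def nth_append last_conv_nth less_Suc_eq
             dest: at_last split: if_splits)
  have "length xs - 1 \<notin> descents xs" by (auto simp: descents_def)
  then show ?thesis
    unfolding num_descents_def descents_eq using finite_descents[of xs] by auto
qed

lemma num_descents_append_sorted:
  assumes "sorted_wrt (<) ys" "xs \<noteq> []" "ys \<noteq> []"
  shows "num_descents (xs @ ys) = num_descents xs + (if last xs > hd ys then 1 else 0)"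
  using assms
proof (induction ys rule: rev_induct)
  case Nil
  then show ?case by simp
next
  case (snoc y ys)
  show ?case
  proof (cases "ys = []")
    case True
    then show ?thesis using snoc.prems(2) num_descents_snoc[of xs y] by simp
  next
    case False
    have sorted: "sorted_wrt (<) ys" and "last ys < y"
      using snoc.prems False by (auto simp: sorted_wrt_append)
    then have "num_descents (xs @ ys @ [y]) = num_descents (xs @ ys)"
      using num_descents_snoc[of "xs @ ys" y] False by simp
    then show ?thesis
      using snoc.IH[OF sorted snoc.prems(2) False] False by simp
  qed
qed

section \<open>Part (1): the run-index word of a permutation\<close>

lemma pos_nth: "distinct \<pi> \<Longrightarrow> p < length \<pi> \<Longrightarrow> pos \<pi> (\<pi> ! p) = p"
  unfolding pos_def by (rule Least_equality) (auto simp: nth_eq_iff_index_eq)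

lemma run_index_nth:
  "distinct \<pi> \<Longrightarrow> p < length \<pi> \<Longrightarrow> run_index \<pi> (\<pi> ! p) = 1 + descents_before \<pi> p"
  by (simp add: run_index_def descents_before_def pos_nth)

lemma length_f_map: "length (f_map \<pi>) = length \<pi>"
  by (simp add: f_map_def del: upt_Suc)

lemma f_map_at_letter:
  assumes "is_perm \<pi>" "p < length \<pi>"
  shows "\<pi> ! p - 1 < length \<pi>" "f_map \<pi> ! (\<pi> ! p - 1) = 1 + descents_before \<pi> p"
proof -
  have "\<pi> ! p \<in> {1..length \<pi>}" using assms nth_mem by (auto simp: is_perm_def)
  then show "\<pi> ! p - 1 < length \<pi>" by auto
  then have "f_map \<pi> ! (\<pi> ! p - 1) = run_index \<pi> (Suc (\<pi> ! p - 1))"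
    by (simp add: f_map_def del: upt_Suc)
  also have "Suc (\<pi> ! p - 1) = \<pi> ! p" using \<open>\<pi> ! p \<in> {1..length \<pi>}\<close> by simp
  finally show "f_map \<pi> ! (\<pi> ! p - 1) = 1 + descents_before \<pi> p"
    using assms run_index_nth by (simp add: is_perm_def)
qed

lemma set_f_map:
  assumes "is_perm \<pi>"
  shows "set (f_map \<pi>) = (\<lambda>p. 1 + descents_before \<pi> p) ` {..<length \<pi>}"
proof -
  have "set (f_map \<pi>) = run_index \<pi> ` {1..<length \<pi> + 1}"
    by (simp only: f_map_def set_map set_upt)
  also have "{1..<length \<pi> + 1} = set \<pi>"
    using assms by (simp add: is_perm_def atLeastLessThanSuc_atLeastAtMost)
  also have "set \<pi> = (!) \<pi> ` {..<length \<pi>}"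
    unfolding set_conv_nth by blast
  also have "run_index \<pi> ` ((!) \<pi> ` {..<length \<pi>}) =
             (\<lambda>p. 1 + descents_before \<pi> p) ` {..<length \<pi>}"
    unfolding image_image using assms
    by (intro image_cong) (auto simp: is_perm_def run_index_nth)
  finally show ?thesis .
qed

lemma set_f_map_eq:
  assumes perm: "is_perm \<pi>"
  shows "set (f_map \<pi>) = {1..num_descents \<pi> + 1}"
proof
  show "set (f_map \<pi>) \<subseteq> {1..num_descents \<pi> + 1}"
    unfolding set_f_map[OF perm] using descents_before_le[of \<pi>] by auto
next
  show "{1..num_descents \<pi> + 1} \<subseteq> set (f_map \<pi>)"
  proof
    fix i assume i: "i \<in> {1..num_descents \<pi> + 1}"
    obtain p where p: "p < length \<pi>" "descents_before \<pi> p = i - 1"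
    proof (cases "i = 1")
      case True
      moreover have "0 < length \<pi>" using perm by (auto simp: is_perm_def)
      ultimately show ?thesis using that[of 0] by (simp add: descents_before_0)
    next
      case False
      then have "0 < i - 1" "i - 1 \<le> descents_before \<pi> (length \<pi> - 1)"
        using i descents_before_last[of \<pi>] by auto
      then obtain s where s: "s < length \<pi> - 1" "s \<in> descents \<pi>"
          "descents_before \<pi> s = i - 1 - 1"
        using descent_with_count by blast
      then have "descents_before \<pi> (Suc s) = i - 1"
        using False i by (simp add: descents_before_Suc; linarith)
      then show ?thesis using that[of "Suc s"] s(1) by simp
    qed
    then have "i = 1 + descents_before \<pi> p" using i by simp
    then show "i \<in> set (f_map \<pi>)"
      unfolding set_f_map[OF perm] using p(1) by (intro image_eqI) auto
  qed
qed

lemma rightmost_ge: "j < length w \<Longrightarrow> w ! j = x \<Longrightarrow> j \<le> rightmost w x"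
  unfolding rightmost_def by (rule Greatest_le_nat[where b = "length w"]) auto

text \<open>AC2 for \<open>f(\<pi>)\<close>: the \<open>i\<close>-th descent places a letter of run \<open>i + 1\<close> to the left of
  a letter of run \<open>i\<close> in \<open>f(\<pi>)\<close>.\<close>
lemma f_map_AC2:
  assumes perm: "is_perm \<pi>" and i: "1 \<le> i" "i \<le> num_descents \<pi>"
  shows "\<exists>j < rightmost (f_map \<pi>) i. f_map \<pi> ! j = i + 1"
proof -
  obtain s where s: "s < length \<pi> - 1" "s \<in> descents \<pi>" "descents_before \<pi> s = i - 1"
    using i descent_with_count[of i \<pi> "length \<pi> - 1"] descents_before_last[of \<pi>] by auto
  have greater: "\<pi> ! Suc s < \<pi> ! s" using s(2) by (simp add: descents_def)
  have "f_map \<pi> ! (\<pi> ! s - 1) = i" "\<pi> ! s - 1 < length (f_map \<pi>)"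
    using f_map_at_letter[OF perm, of s] s i by (auto simp: length_f_map)
  then have "\<pi> ! s - 1 \<le> rightmost (f_map \<pi>) i" by (simp add: rightmost_ge)
  moreover have "f_map \<pi> ! (\<pi> ! Suc s - 1) = i + 1" "\<pi> ! Suc s \<ge> 1"
    using f_map_at_letter[OF perm, of "Suc s"] s i descents_before_Suc[of \<pi> s] perm nth_mem
    by (auto simp: is_perm_def)
  ultimately show ?thesis using greater by (intro exI[of _ "\<pi> ! Suc s - 1"]) auto
qed

theorem f_map_in_Ahat:
  assumes "is_perm \<pi>"
  shows "in_Ahat_k (num_descents \<pi> + 1) (f_map \<pi>)"
proof -
  have max: "maxw (f_map \<pi>) = num_descents \<pi> + 1"
    unfolding maxw_def set_f_map_eq[OF assms] by (intro Max_eqI) auto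
  have "f_map \<pi> \<noteq> []"
    using assms set_f_map_eq[OF assms] by auto
  then show ?thesis
    using set_f_map_eq[OF assms] f_map_AC2[OF assms] max
    unfolding in_Ahat_k_def in_Ahat_def by auto
qed

section \<open>Part (2): the position word of a word in \<open>\<widehat>A\<close>\<close>

lemma set_positions: "set (positions w j) = {i. 1 \<le> i \<and> i \<le> length w \<and> w ! (i - 1) = j}"
  by (auto simp: positions_def)

lemma sorted_positions: "sorted_wrt (<) (positions w j)"
  unfolding positions_def by (rule sorted_wrt_filter) (rule sorted_wrt_upt)

lemma sorted_hd_le: "sorted_wrt (<) (xs :: nat list) \<Longrightarrow> x \<in> set xs \<Longrightarrow> hd xs \<le> x"
  by (cases xs) auto

lemma sorted_le_last: "sorted_wrt (<) (xs :: nat list) \<Longrightarrow> x \<in> set xs \<Longrightarrow> x \<le> last xs"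
  by (induction xs) (auto, meson last_in_set less_imp_le)

definition g_prefix :: "nat list \<Rightarrow> nat \<Rightarrow> nat list" where
  "g_prefix w m = concat (map (positions w) [1..<m + 1])"

lemma g_prefix_Suc: "g_prefix w (Suc m) = g_prefix w m @ positions w (Suc m)"
  by (simp add: g_prefix_def)

lemma set_g_prefix:
  "set (g_prefix w m) = {i. 1 \<le> i \<and> i \<le> length w \<and> w ! (i - 1) \<in> {1..m}}"
proof (induction m)
  case 0
  then show ?case by (simp add: g_prefix_def)
next
  case (Suc m)
  have "set (g_prefix w (Suc m)) = set (g_prefix w m) \<union> set (positions w (Suc m))"
    by (simp add: g_prefix_Suc)
  also have "\<dots> = {i. 1 \<le> i \<and> i \<le> length w \<and> w ! (i - 1) \<in> {1..Suc m}}"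
    unfolding Suc.IH set_positions by (auto simp: le_Suc_eq)
  finally show ?case .
qed

text \<open>Distinct letters have disjoint position sets, so the blocks never repeat an entry.\<close>
lemma distinct_g_prefix: "distinct (g_prefix w m)"
proof (induction m)
  case 0
  then show ?case by (simp add: g_prefix_def)
next
  case (Suc m)
  have "distinct (positions w (Suc m))"
    using sorted_positions strict_sorted_iff by blast
  moreover have "set (g_prefix w m) \<inter> set (positions w (Suc m)) = {}"
    by (auto simp: set_g_prefix set_positions)
  ultimately show ?case using Suc by (simp add: g_prefix_Suc)
qed

lemma positions_nonempty:
  assumes "j \<in> set w"
  shows "positions w j \<noteq> []"
proof -
  obtain r where "r < length w" "w ! r = j" using assms by (auto simp: in_set_conv_nth)
  then have "Suc r \<in> set (positions w j)" by (simp add: set_positions)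
  then show ?thesis by auto
qed

lemma rightmost_occurrence:
  assumes "x \<in> set w"
  shows "rightmost w x < length w \<and> w ! rightmost w x = x"
proof -
  obtain j where j: "j < length w" "w ! j = x" using assms by (auto simp: in_set_conv_nth)
  show ?thesis
    unfolding rightmost_def
    by (rule GreatestI_nat[where k = j and b = "length w"]) (use j in auto)
qed

lemma in_Ahat_AC1: "in_Ahat w \<Longrightarrow> 1 \<le> i \<Longrightarrow> i \<le> maxw w \<Longrightarrow> i \<in> set w"
  unfolding in_Ahat_def by (meson atLeastAtMost_iff)

lemma in_Ahat_AC2:
  "in_Ahat w \<Longrightarrow> 1 \<le> i \<Longrightarrow> i < maxw w \<Longrightarrow> \<exists>j < rightmost w i. w ! j = i + 1"
  unfolding in_Ahat_def by (meson atLeastLessThan_iff)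

text \<open>AC2 makes every junction of consecutive blocks a descent of \<open>g(w)\<close>.\<close>
lemma positions_junction_descent:
  assumes w: "in_Ahat w" and m: "1 \<le> m" "m < maxw w"
  shows "hd (positions w (Suc m)) < last (positions w m)"
proof -
  have r: "rightmost w m < length w" "w ! rightmost w m = m"
    using rightmost_occurrence[OF in_Ahat_AC1[OF w m(1)]] m(2) by auto
  obtain j where j: "j < rightmost w m" "w ! j = m + 1"
    using in_Ahat_AC2[OF w m] by blast
  have "Suc (rightmost w m) \<in> set (positions w m)" using r by (simp add: set_positions)
  then have "Suc (rightmost w m) \<le> last (positions w m)"
    using sorted_le_last sorted_positions by blast
  moreover have "Suc j \<in> set (positions w (Suc m))" using r j by (simp add: set_positions)
  then have "hd (positions w (Suc m)) \<le> Suc j" using sorted_hd_le sorted_positions by blast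
  ultimately show ?thesis using j by simp
qed

lemma num_descents_g_prefix:
  assumes w: "in_Ahat w" and m: "1 \<le> m" "m \<le> maxw w"
  shows "num_descents (g_prefix w m) = m - 1 \<and> g_prefix w m \<noteq> []
         \<and> last (g_prefix w m) = last (positions w m)"
  using m
proof (induction m rule: dec_induct)
  case base
  have "positions w 1 \<noteq> []"
    using positions_nonempty[OF in_Ahat_AC1[OF w order.refl base]] .
  then show ?case
    using num_descents_sorted[OF sorted_positions] by (simp add: g_prefix_def)
next
  case (step m)
  then have IH: "num_descents (g_prefix w m) = m - 1" "g_prefix w m \<noteq> []"
      "last (g_prefix w m) = last (positions w m)"
    by simp_all
  have block: "positions w (Suc m) \<noteq> []"
    using positions_nonempty[OF in_Ahat_AC1[OF w _ step.prems]] by simp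
  have "hd (positions w (Suc m)) < last (g_prefix w m)"
    using positions_junction_descent[OF w step.hyps(1)] step.prems IH(3) by simp
  then have "num_descents (g_prefix w (Suc m)) = num_descents (g_prefix w m) + 1"
    using num_descents_append_sorted[OF sorted_positions IH(2) block] by (simp add: g_prefix_Suc)
  then show ?case using IH step.hyps(1) block by (simp add: g_prefix_Suc)
qed

lemma in_Ahat_letter_range:
  assumes "in_Ahat w" "x \<in> set w"
  shows "1 \<le> x" "x \<le> maxw w"
proof -
  show "1 \<le> x" using assms unfolding in_Ahat_def by blast
  show "x \<le> maxw w" using assms(2) unfolding maxw_def by simp
qed

text \<open>Part (2a): the blocks partition \<open>{1..|w|}\<close>, so \<open>g(w)\<close> is a permutation.\<close>
lemma g_map_perm:
  assumes w: "in_Ahat w"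
  shows "is_perm (g_map w)"
proof -
  have g: "g_map w = g_prefix w (maxw w)" by (simp add: g_map_def g_prefix_def)
  have "w ! (i - 1) \<in> {1..maxw w}" if "1 \<le> i" "i \<le> length w" for i
    using in_Ahat_letter_range[OF w, of "w ! (i - 1)"] that by simp
  then have set_g: "set (g_map w) = {1..length w}"
    unfolding g set_g_prefix by auto
  have "length (g_map w) = length w"
    using distinct_card[OF distinct_g_prefix[of w "maxw w"]] set_g g by simp
  moreover have "w \<noteq> []" using w unfolding in_Ahat_def by blast
  ultimately show ?thesis
    using set_g distinct_g_prefix[of w "maxw w"] g by (simp add: is_perm_def Suc_le_eq)
qed

lemma g_map_descents:
  assumes w: "in_Ahat w"
  shows "num_descents (g_map w) = maxw w - 1"
proof -
  have "w \<noteq> []" using w unfolding in_Ahat_def by blast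
  then have "1 \<le> maxw w" using in_Ahat_letter_range[OF w, of "hd w"] by simp
  then show ?thesis
    using num_descents_g_prefix[OF w, of "maxw w"] by (simp add: g_map_def g_prefix_def)
qed

theorem mainTheorem1:
  fixes k :: nat
  shows "(\<forall>\<pi>. is_perm \<pi> \<and> num_descents \<pi> = k \<longrightarrow> in_Ahat_k (k + 1) (f_map \<pi>))
       \<and> (\<forall>w. in_Ahat_k (k + 1) w \<longrightarrow> is_perm (g_map w) \<and> num_descents (g_map w) = k)"
proof (intro conjI allI impI)
  fix \<pi> assume "is_perm \<pi> \<and> num_descents \<pi> = k"
  then show "in_Ahat_k (k + 1) (f_map \<pi>)" using f_map_in_Ahat by blast
next
  fix w assume "in_Ahat_k (k + 1) w"
  then have w: "in_Ahat w" and max: "maxw w = k + 1" unfolding in_Ahat_k_def by blast+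
  show "is_perm (g_map w)" using g_map_perm[OF w] .
  show "num_descents (g_map w) = k" using g_map_descents[OF w] max by simp
qed

end
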